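(* Let $X$ be a Bruhat–Tits tree and let $\mathcal{G}$ be a closed subgroup of $\mathrm{Aut}(X)$ acting transitively on the vertex set $X^0$. Then the following three conditions are equivalent: (1) for any two pairs of vertices $(x_1,x_2)$, $(y_1,y_2)$ with $d(x_1,x_2)=d(y_1,y_2)$ there is $g\in\mathcal{G}$ with $g(x_i)=y_i$ for $i=1,2$; (2) for any vertices $x,y,z$ with $d(x,y)=d(x,z)$ there is $g\in\mathcal{G}$ with $g(x)=x$ and $g(y)=z$; (3) for any ends $\omega_1\neq\omega_2$ and $\sigma_1\neq\sigma_2$, any vertex $x_0$ on the apartment $[\omega_1,\omega_2]$ and any vertex $y_0$ on the apartment $[\sigma_1,\sigma_2]$, there is $g\in\mathcal{G}$ with $g(x_0)=y_0$ and $g(\omega_i)=\sigma_i$ for $i=1,2$. In particular, such a $\mathcal{G}$ satisfying any of these conditions is weakly two-transitive.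
   Context: A tree is a nonempty connected graph without cycles; it is a Bruhat–Tits tree if every vertex lies on exactly $m+1$ edges for some fixed integer $m\ge 2$. The distance $d(x,y)$ between vertices is the number of edges on the unique path joining them. $\mathrm{Aut}(X)$ is the group of bijections of $X^0$ preserving $d$, with the topology of pointwise convergence (as maps $X^0\to X^0$, $X^0$ discrete). An infinite path is a sequence $(x_i)_{i\in\mathbb{N}}$ of distinct vertices with consecutive ones adjacent; an end is an equivalence class of infinite paths, two paths being equivalent if they agree after a shift of index from some point on ($x_i=y_{i+k}$ for all $i>p$). Automorphisms act on ends. For distinct ends $\omega,\omega'$, the apartment $[\omega,\omega']$ is the unique doubly infinite path whose two halves represent $\omega$ and $\omega'$. A subgroup $\mathcal{G}\subseteq\mathrm{Aut}(X)$ is weakly two-transitive if it satisfies condition (1). *)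

theory Defs
  imports Main
begin

text \<open>A graph is given by an adjacency relation E on the vertex type 'a
(the vertex set X^0 is the whole type).\<close>

definition walk :: "('a \<Rightarrow> 'a \<Rightarrow> bool) \<Rightarrow> 'a list \<Rightarrow> bool" where
  "walk E w \<longleftrightarrow> w \<noteq> [] \<and> (\<forall>i < length w - 1. E (w ! i) (w ! Suc i))"

definition is_cycle :: "('a \<Rightarrow> 'a \<Rightarrow> bool) \<Rightarrow> 'a list \<Rightarrow> bool" where
  "is_cycle E c \<longleftrightarrow> walk E c \<and> length c \<ge> 4 \<and> hd c = last c \<and> distinct (tl c)"

definition is_tree :: "('a \<Rightarrow> 'a \<Rightarrow> bool) \<Rightarrow> bool" where
  "is_tree E \<longleftrightarrow> (\<forall>x y. E x y \<longrightarrow> E y x) \<and> (\<forall>x. \<not> E x x)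
     \<and> (\<forall>x y. \<exists>w. walk E w \<and> hd w = x \<and> last w = y)
     \<and> (\<nexists>c. is_cycle E c)"

definition bruhat_tits_tree :: "('a \<Rightarrow> 'a \<Rightarrow> bool) \<Rightarrow> bool" where
  "bruhat_tits_tree E \<longleftrightarrow> is_tree E \<and>
     (\<exists>m::nat. m \<ge> 2 \<and> (\<forall>v. finite {w. E v w} \<and> card {w. E v w} = m + 1))"

definition dist :: "('a \<Rightarrow> 'a \<Rightarrow> bool) \<Rightarrow> 'a \<Rightarrow> 'a \<Rightarrow> nat" where
  "dist E x y = (LEAST n. \<exists>w. walk E w \<and> hd w = x \<and> last w = y \<and> length w = n + 1)"

definition Aut :: "('a \<Rightarrow> 'a \<Rightarrow> bool) \<Rightarrow> ('a \<Rightarrow> 'a) set" where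
  "Aut E = {f. bij f \<and> (\<forall>x y. dist E (f x) (f y) = dist E x y)}"

definition is_subgroup :: "('a \<Rightarrow> 'a \<Rightarrow> bool) \<Rightarrow> ('a \<Rightarrow> 'a) set \<Rightarrow> bool" where
  "is_subgroup E G \<longleftrightarrow> G \<subseteq> Aut E \<and> id \<in> G \<and> (\<forall>f\<in>G. \<forall>g\<in>G. f \<circ> g \<in> G)
     \<and> (\<forall>g\<in>G. inv g \<in> G)"

text \<open>Closedness in the topology of pointwise convergence (X^0 discrete):
  every automorphism all of whose basic neighbourhoods (agreement on a finite
  set of vertices) meet G belongs to G.\<close>
definition closed_in_Aut :: "('a \<Rightarrow> 'a \<Rightarrow> bool) \<Rightarrow> ('a \<Rightarrow> 'a) set \<Rightarrow> bool" where
  "closed_in_Aut E G \<longleftrightarrow> (\<forall>f\<in>Aut E.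
      (\<forall>F. finite F \<longrightarrow> (\<exists>g\<in>G. \<forall>x\<in>F. g x = f x)) \<longrightarrow> f \<in> G)"

definition vertex_transitive :: "('a \<Rightarrow> 'a) set \<Rightarrow> bool" where
  "vertex_transitive G \<longleftrightarrow> (\<forall>x y. \<exists>g\<in>G. g x = y)"

definition inf_path :: "('a \<Rightarrow> 'a \<Rightarrow> bool) \<Rightarrow> (nat \<Rightarrow> 'a) \<Rightarrow> bool" where
  "inf_path E p \<longleftrightarrow> inj p \<and> (\<forall>i. E (p i) (p (Suc i)))"

definition path_equiv :: "(nat \<Rightarrow> 'a) \<Rightarrow> (nat \<Rightarrow> 'a) \<Rightarrow> bool" where
  "path_equiv x y \<longleftrightarrow> (\<exists>k N. \<forall>i>N. x i = y (i + k)) \<or> (\<exists>k N. \<forall>i>N. y i = x (i + k))"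

definition is_end :: "('a \<Rightarrow> 'a \<Rightarrow> bool) \<Rightarrow> (nat \<Rightarrow> 'a) set \<Rightarrow> bool" where
  "is_end E \<omega> \<longleftrightarrow> (\<exists>r. inf_path E r \<and> \<omega> = {s. inf_path E s \<and> path_equiv r s})"

definition end_image :: "('a \<Rightarrow> 'a) \<Rightarrow> (nat \<Rightarrow> 'a) set \<Rightarrow> (nat \<Rightarrow> 'a) set" where
  "end_image g \<omega> = (\<lambda>s. g \<circ> s) ` \<omega>"

definition biinf_path :: "('a \<Rightarrow> 'a \<Rightarrow> bool) \<Rightarrow> (int \<Rightarrow> 'a) \<Rightarrow> bool" where
  "biinf_path E b \<longleftrightarrow> inj b \<and> (\<forall>i. E (b i) (b (i + 1)))"

definition apartment :: "('a \<Rightarrow> 'a \<Rightarrow> bool) \<Rightarrow> (nat \<Rightarrow> 'a) set \<Rightarrow> (nat \<Rightarrow> 'a) set \<Rightarrow> 'a set" where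
  "apartment E \<omega>1 \<omega>2 = {x. \<exists>b. biinf_path E b \<and> (\<lambda>n. b (int n)) \<in> \<omega>1
      \<and> (\<lambda>n. b (- int n)) \<in> \<omega>2 \<and> x \<in> range b}"

definition weakly_two_transitive :: "('a \<Rightarrow> 'a \<Rightarrow> bool) \<Rightarrow> ('a \<Rightarrow> 'a) set \<Rightarrow> bool" where
  "weakly_two_transitive E G \<longleftrightarrow> (\<forall>x1 x2 y1 y2. dist E x1 x2 = dist E y1 y2 \<longrightarrow>
      (\<exists>g\<in>G. g x1 = y1 \<and> g x2 = y2))"

end

(*
  In a tree, non-backtracking walks are geodesics and are determined by their endpoints.
  (1) and (2) are equivalent by vertex transitivity. For (3) => (2), extend geodesics from x
  to y and from x to z to apartments having x at position 0: an element of G fixing x and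
  mapping the first end of one apartment to the first end of the other maps the ray from x
  through y onto the ray from x through z, hence y to z. For (1) => (3), parametrise both
  apartments by the integers with the given vertices at 0. By (1) and uniqueness of
  geodesics, for every n some element of G maps the first parametrisation to the second on
  [-n, n]. Balls are finite, so by Tychonoff's theorem these elements accumulate at an
  isometry f, which is onto because the tree is regular, lies in G because G is closed, and
  maps the first apartment with its ends to the second.
*)
theory Submission
  imports "HOL-Analysis.Function_Topology" Defs
begin

section \<open>Walks and geodesics\<close>

lemma walk_Cons: "walk E (x # y # w) \<longleftrightarrow> E x y \<and> walk E (y # w)"
  unfolding walk_def by (auto simp: nth_Cons split: nat.splits)

lemma walk_single [simp]: "walk E [x]"
  unfolding walk_def by auto

lemma walk_nth: "walk E w \<Longrightarrow> Suc i < length w \<Longrightarrow> E (w ! i) (w ! Suc i)"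
  unfolding walk_def by auto

lemma walk_take: "walk E w \<Longrightarrow> 0 < n \<Longrightarrow> walk E (take n w)"
  unfolding walk_def by auto

lemma walk_drop: "walk E w \<Longrightarrow> n < length w \<Longrightarrow> walk E (drop n w)"
  unfolding walk_def by (auto simp: add.commute)

lemma walk_append: "walk E p \<Longrightarrow> walk E q \<Longrightarrow> last p = hd q \<Longrightarrow> walk E (p @ tl q)"
proof (induction p rule: induct_list012)
  case (2 x) then show ?case by (cases q) auto
next
  case (3 x y zs) then show ?case by (simp add: walk_Cons)
qed (simp add: walk_def)

lemma dist_le_walk: "walk E w \<Longrightarrow> hd w = x \<Longrightarrow> last w = y \<Longrightarrow> dist E x y \<le> length w - 1"
  unfolding dist_def by (rule Least_le) (auto simp: walk_def)

definition geodesic :: "('a \<Rightarrow> 'a \<Rightarrow> bool) \<Rightarrow> 'a \<Rightarrow> 'a \<Rightarrow> 'a list \<Rightarrow> bool" where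
  "geodesic E x y w \<longleftrightarrow> walk E w \<and> hd w = x \<and> last w = y \<and> length w = dist E x y + 1"

definition nonbacktracking :: "('a \<Rightarrow> 'a \<Rightarrow> bool) \<Rightarrow> 'a list \<Rightarrow> bool" where
  "nonbacktracking E w \<longleftrightarrow> walk E w \<and> (\<forall>i < length w - 2. w ! i \<noteq> w ! Suc (Suc i))"

lemma nonbacktracking_Nil [simp]: "\<not> nonbacktracking E []"
  unfolding nonbacktracking_def walk_def by simp

lemma nonbacktracking_single [simp]: "nonbacktracking E [x]"
  unfolding nonbacktracking_def by simp

lemma nonbacktracking_Cons_Cons:
  "nonbacktracking E (x # y # w) \<longleftrightarrow>
     E x y \<and> (w \<noteq> [] \<longrightarrow> hd w \<noteq> x) \<and> nonbacktracking E (y # w)"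
  unfolding nonbacktracking_def walk_Cons by (cases w) (auto simp: All_less_Suc2)

lemma nonbacktracking_tl: "nonbacktracking E (x # w) \<Longrightarrow> w \<noteq> [] \<Longrightarrow> nonbacktracking E w"
  by (cases w) (auto simp: nonbacktracking_Cons_Cons)

lemma nonbacktracking_imp_walk: "nonbacktracking E w \<Longrightarrow> walk E w"
  unfolding nonbacktracking_def by simp

lemma nonbacktracking_take: "nonbacktracking E w \<Longrightarrow> 0 < n \<Longrightarrow> nonbacktracking E (take n w)"
  unfolding nonbacktracking_def walk_def by auto

lemma distinct_walk_nonbacktracking: "walk E w \<Longrightarrow> distinct w \<Longrightarrow> nonbacktracking E w"
  unfolding nonbacktracking_def by (auto simp: nth_eq_iff_index_eq)

lemma nonbacktracking_append_Cons:
  assumes "nonbacktracking E (p @ [u])" "nonbacktracking E (u # q)"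
    and "p \<noteq> []" "q \<noteq> []" "last p \<noteq> hd q"
  shows "nonbacktracking E (p @ u # q)"
  using assms
proof (induction p rule: induct_list012)
  case (2 x) then show ?case by (cases q) (auto simp: nonbacktracking_Cons_Cons)
next
  case (3 x y p)
  then show ?case by (cases p) (auto simp: nonbacktracking_Cons_Cons)
qed simp

lemma nonbacktracking_rev:
  assumes "symp E" "nonbacktracking E w"
  shows "nonbacktracking E (rev w)"
  using assms(2)
proof (induction w rule: induct_list012)
  case (3 x y w)
  show ?case
  proof (cases "w = []")
    case True
    then show ?thesis using 3 assms(1) by (auto simp: nonbacktracking_Cons_Cons dest: sympD)
  next
    case False
    have "nonbacktracking E (rev w @ [y])" using 3 by (simp add: nonbacktracking_Cons_Cons)
    moreover have "nonbacktracking E [y, x]"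
      using 3 assms(1) by (auto simp: nonbacktracking_Cons_Cons dest: sympD)
    moreover have "last (rev w) \<noteq> x" using 3 False by (simp add: nonbacktracking_Cons_Cons last_rev)
    ultimately show ?thesis using nonbacktracking_append_Cons[of E "rev w" y "[x]"] False by simp
  qed
qed simp_all

section \<open>Non-backtracking sequences and ends\<close>

definition nonbacktracking_seq :: "('a \<Rightarrow> 'a \<Rightarrow> bool) \<Rightarrow> (nat \<Rightarrow> 'a) \<Rightarrow> bool" where
  "nonbacktracking_seq E s \<longleftrightarrow> (\<forall>i. E (s i) (s (Suc i))) \<and> (\<forall>i. s (Suc (Suc i)) \<noteq> s i)"

lemma nonbacktracking_seq_prefix:
  "nonbacktracking_seq E s \<Longrightarrow> nonbacktracking E (map (\<lambda>t. s (i + t)) [0..<Suc n])"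
  unfolding nonbacktracking_seq_def nonbacktracking_def walk_def
  by (auto simp del: upt_Suc) metis

lemma nonbacktracking_seq_case_nat:
  "nonbacktracking_seq E (case_nat x s) \<longleftrightarrow> E x (s 0) \<and> s 1 \<noteq> x \<and> nonbacktracking_seq E s"
proof -
  have all_nat: "(\<forall>i. P i) \<longleftrightarrow> P 0 \<and> (\<forall>i. P (Suc i))" for P :: "nat \<Rightarrow> bool"
    by (metis not0_implies_Suc)
  show ?thesis
    unfolding nonbacktracking_seq_def by (subst (1 2) all_nat) auto
qed

primrec prepend :: "'a list \<Rightarrow> (nat \<Rightarrow> 'a) \<Rightarrow> nat \<Rightarrow> 'a" where
  "prepend [] s = s"
| "prepend (x # p) s = case_nat x (prepend p s)"

lemma prepend_0: "prepend p s 0 = hd (p @ [s 0])"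
  by (cases p) auto

lemma prepend_length_add: "prepend p s (length p + i) = s i"
  by (induction p) auto

lemma nonbacktracking_seq_prepend:
  assumes "nonbacktracking E (p @ [s 0])" "nonbacktracking_seq E s" "p \<noteq> [] \<Longrightarrow> s 1 \<noteq> last p"
  shows "nonbacktracking_seq E (prepend p s)"
  using assms
proof (induction p rule: induct_list012)
  case (2 x)
  then show ?case by (simp add: nonbacktracking_seq_case_nat nonbacktracking_Cons_Cons)
next
  case (3 x y p)
  then show ?case
    by (cases p) (auto simp: nonbacktracking_seq_case_nat nonbacktracking_Cons_Cons)
qed simp_all

lemma nonbacktracking_seq_int_shift:
  assumes "\<And>i. E (b i) (b (i + 1))" "\<And>i. b (i + 2) \<noteq> b i"
  shows "nonbacktracking_seq E (\<lambda>n. b (j + int n))"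
proof -
  have "E (b (j + int n)) (b (j + int n + 1))" "b (j + int n + 2) \<noteq> b (j + int n)" for n
    using assms by blast+
  then show ?thesis
    unfolding nonbacktracking_seq_def by (simp add: ac_simps)
qed

lemma biinf_path_shift_seq: "biinf_path E b \<Longrightarrow> nonbacktracking_seq E (\<lambda>n. b (j + int n))"
  by (rule nonbacktracking_seq_int_shift) (auto simp: biinf_path_def inj_eq)

lemma path_equiv_iff_shift: "path_equiv x y \<longleftrightarrow> (\<exists>a b N. \<forall>i>N. x (i + a) = y (i + b))"
proof
  assume "path_equiv x y"
  then show "\<exists>a b N. \<forall>i>N. x (i + a) = y (i + b)"
    unfolding path_equiv_def by (metis add_0_right)
next
  assume "\<exists>a b N. \<forall>i>N. x (i + a) = y (i + b)"
  then obtain a b N where h: "\<forall>i>N. x (i + a) = y (i + b)" by blast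
  show "path_equiv x y"
  proof (cases "a \<le> b")
    case True
    have "x j = y (j + (b - a))" if "j > N + a" for j
      using h[rule_format, of "j - a"] that True by simp
    then show ?thesis unfolding path_equiv_def by blast
  next
    case False
    have "y j = x (j + (a - b))" if "j > N + b" for j
      using h[rule_format, of "j - b"] that False by simp
    then show ?thesis unfolding path_equiv_def by blast
  qed
qed

lemma path_equiv_refl: "path_equiv x x"
  unfolding path_equiv_def by (metis add_0_right)

lemma path_equiv_sym: "path_equiv x y \<Longrightarrow> path_equiv y x"
  unfolding path_equiv_def by blast

lemma path_equiv_trans: "path_equiv x y \<Longrightarrow> path_equiv y z \<Longrightarrow> path_equiv x z"
proof -
  assume "path_equiv x y" "path_equiv y z"
  then obtain a b c d N M where 1: "\<forall>i>N. x (i + a) = y (i + b)"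
    and 2: "\<forall>i>M. y (i + c) = z (i + d)"
    unfolding path_equiv_iff_shift by blast
  have "x (i + (a + c)) = z (i + (b + d))" if "i > N + M" for i
    using 1[rule_format, of "i + c"] 2[rule_format, of "i + b"] that by (simp add: algebra_simps)
  then show "path_equiv x z" unfolding path_equiv_iff_shift by blast
qed

lemma path_equiv_comp: "path_equiv x y \<Longrightarrow> path_equiv (h \<circ> x) (h \<circ> y)"
  unfolding path_equiv_def by (auto; metis)

lemma path_equiv_shift_int:
  "path_equiv (\<lambda>n. f (int n)) (\<lambda>n. f (int n + j))"
proof (cases "0 \<le> j")
  case True
  then have "\<forall>i>0. f (int i + j) = f (int (i + nat j))" by simp
  then show ?thesis unfolding path_equiv_def by blast
next
  case False
  then have "\<forall>i>0. f (int i) = f (int (i + nat (- j)) + j)" by simp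
  then show ?thesis unfolding path_equiv_def by blast
qed

definition end_of :: "('a \<Rightarrow> 'a \<Rightarrow> bool) \<Rightarrow> (nat \<Rightarrow> 'a) \<Rightarrow> (nat \<Rightarrow> 'a) set" where
  "end_of E r = {s. inf_path E s \<and> path_equiv r s}"

lemma is_end_end_of: "inf_path E r \<Longrightarrow> is_end E (end_of E r)"
  unfolding is_end_def end_of_def by blast

lemma end_of_self: "inf_path E r \<Longrightarrow> r \<in> end_of E r"
  unfolding end_of_def by (simp add: path_equiv_refl)

lemma end_of_cong: "path_equiv r s \<Longrightarrow> end_of E r = end_of E s"
  unfolding end_of_def by (metis path_equiv_trans path_equiv_sym)

lemma end_of_eq: "is_end E \<omega> \<Longrightarrow> s \<in> \<omega> \<Longrightarrow> end_of E s = \<omega>"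
proof -
  assume "is_end E \<omega>" "s \<in> \<omega>"
  then obtain r where "\<omega> = end_of E r" "path_equiv r s"
    unfolding is_end_def end_of_def by blast
  then show ?thesis using end_of_cong by metis
qed

lemma Aut_dist: "f \<in> Aut E \<Longrightarrow> dist E (f x) (f y) = dist E x y"
  unfolding Aut_def by simp

lemma Aut_inj: "f \<in> Aut E \<Longrightarrow> inj f"
  unfolding Aut_def by (simp add: bij_is_inj)

lemma Aut_inv: assumes "f \<in> Aut E" shows "inv f \<in> Aut E"
proof -
  have bij: "bij f" using assms by (simp add: Aut_def)
  have "dist E (inv f x) (inv f y) = dist E x y" for x y
  proof -
    have "dist E (inv f x) (inv f y) = dist E (f (inv f x)) (f (inv f y))"
      by (rule Aut_dist[OF assms, symmetric])
    also have "\<dots> = dist E x y" using bij by (simp add: bij_is_surj surj_f_inv_f)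
    finally show ?thesis .
  qed
  with bij_imp_bij_inv[OF bij] show ?thesis unfolding Aut_def by blast
qed

section \<open>Trees\<close>

locale tree =
  fixes E :: "'a \<Rightarrow> 'a \<Rightarrow> bool"
  assumes is_tree: "is_tree E"
begin

lemma symp_adjacent: "symp E"
  using is_tree unfolding is_tree_def by (auto intro: sympI)

lemma adjacent_sym: "E x y \<Longrightarrow> E y x"
  using symp_adjacent by (rule sympD)

lemma adjacent_irrefl: "\<not> E x x"
  using is_tree unfolding is_tree_def by blast

lemma connected: "\<exists>w. walk E w \<and> hd w = x \<and> last w = y"
  using is_tree unfolding is_tree_def by blast

lemma no_cycle: "\<not> is_cycle E c"
  using is_tree unfolding is_tree_def by blast

lemma nonbacktracking_distinct: "nonbacktracking E w \<Longrightarrow> distinct w"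
proof (induction w)
  case (Cons x w)
  show ?case
  proof (cases "w = []")
    case False
    have "x \<notin> set w"
    proof
      \<comment> \<open>otherwise x, w ! 0, ..., w ! j = x would be a cycle\<close>
      assume "x \<in> set w"
      then obtain j where j: "j < length w" "w ! j = x" by (auto simp: in_set_conv_nth)
      obtain y w' where w: "w = y # w'" using False by (cases w) auto
      have "j \<noteq> 0"
        using Cons.prems j adjacent_irrefl by (cases j) (auto simp: w nonbacktracking_Cons_Cons)
      moreover have "j \<noteq> 1"
        using Cons.prems j by (cases w') (auto simp: w nonbacktracking_Cons_Cons)
      ultimately have "4 \<le> length (take (j + 2) (x # w))" using j by simp
      moreover have "walk E (take (j + 2) (x # w))"
        using Cons.prems
        by (simp add: nonbacktracking_imp_walk nonbacktracking_take del: take_Suc_Cons)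
      moreover have "hd (take (j + 2) (x # w)) = last (take (j + 2) (x # w))"
        using j by (simp add: last_conv_nth)
      moreover have "distinct (take (j + 1) w)"
        using Cons False by (simp add: nonbacktracking_tl)
      ultimately have "is_cycle E (take (j + 2) (x # w))" unfolding is_cycle_def by simp
      then show False using no_cycle by blast
    qed
    then show ?thesis using Cons False by (simp add: nonbacktracking_tl)
  qed simp
qed simp

lemma nonbacktracking_closed: "nonbacktracking E w \<Longrightarrow> hd w = last w \<Longrightarrow> length w = 1"
  using nonbacktracking_distinct[of w]
  by (cases w rule: rev_cases) (auto simp: hd_append split: if_splits)

lemma nonbacktracking_unique:
  "nonbacktracking E p \<Longrightarrow> nonbacktracking E q \<Longrightarrow> hd p = hd q \<Longrightarrow> last p = last q \<Longrightarrow> p = q"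
proof (induction p arbitrary: q)
  case (Cons u p)
  obtain q' where q: "q = u # q'" using Cons.prems by (cases q) auto
  consider "p = []" | "q' = []" | "p \<noteq> []" "q' \<noteq> []" "hd p = hd q'"
    | "p \<noteq> []" "q' \<noteq> []" "hd p \<noteq> hd q'" by blast
  then show ?case
  proof cases
    case 1
    then show ?thesis
      using Cons.prems nonbacktracking_closed[of q] by (auto simp: q length_Suc_conv)
  next
    case 2
    then show ?thesis
      using Cons.prems nonbacktracking_closed[of "u # p"] by (auto simp: q length_Suc_conv)
  next
    case 3
    then show ?thesis using Cons by (auto simp: q intro: nonbacktracking_tl)
  next
    case 4
    \<comment> \<open>reversing p and continuing along q gives a closed non-backtracking walk\<close>
    have "nonbacktracking E (rev p @ u # q')"
    proof (rule nonbacktracking_append_Cons)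
      show "nonbacktracking E (rev p @ [u])"
        using nonbacktracking_rev[OF symp_adjacent Cons.prems(1)] by simp
    qed (use Cons.prems 4 in \<open>auto simp: q last_rev\<close>)
    moreover have "hd (rev p @ u # q') = last (rev p @ u # q')"
      using Cons.prems 4 by (simp add: q hd_rev)
    ultimately show ?thesis using nonbacktracking_closed 4 by fastforce
  qed
qed simp

lemma geodesic_exists: "\<exists>w. geodesic E x y w"
proof -
  obtain w where "walk E w" "hd w = x" "last w = y" using connected by blast
  then have "\<exists>n w. walk E w \<and> hd w = x \<and> last w = y \<and> length w = n + 1"
    by (intro exI[of _ "length w - 1"] exI[of _ w]) (auto simp: walk_def)
  then show ?thesis unfolding geodesic_def dist_def by (rule LeastI_ex)
qed

lemma geodesic_distinct:
  assumes w: "geodesic E x y w" shows "distinct w"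
proof (rule ccontr)
  assume "\<not> distinct w"
  then obtain i j where ij: "i < j" "j < length w" "w ! i = w ! j"
    by (auto simp: distinct_conv_nth) (metis linorder_neqE_nat)
  let ?v = "take (Suc i) w @ drop (Suc j) w"
  have last_take: "last (take (Suc i) w) = w ! j"
    using ij by (simp add: take_Suc_conv_app_nth)
  have "?v = take (Suc i) w @ tl (drop j w)" by (simp add: drop_Suc tl_drop)
  moreover have "last (take (Suc i) w) = hd (drop j w)"
    using ij last_take by (simp add: hd_drop_conv_nth)
  ultimately have "walk E ?v"
    using w ij unfolding geodesic_def by (metis walk_append walk_take walk_drop zero_less_Suc)
  moreover have "hd ?v = x" using w by (cases w) (auto simp: geodesic_def)
  moreover have "last ?v = y"
  proof (cases "Suc j = length w")
    case True
    have "w \<noteq> []" using ij by auto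
    then have "last w = w ! j" by (simp add: last_conv_nth flip: True)
    then show ?thesis using True w last_take by (simp add: geodesic_def)
  next
    case False
    then show ?thesis using w ij by (simp add: geodesic_def last_drop)
  qed
  ultimately have "dist E x y \<le> length ?v - 1" by (rule dist_le_walk)
  then show False using w ij unfolding geodesic_def by simp
qed

lemma geodesic_nonbacktracking: "geodesic E x y w \<Longrightarrow> nonbacktracking E w"
  using geodesic_distinct distinct_walk_nonbacktracking unfolding geodesic_def by blast

lemma nonbacktracking_geodesic: "nonbacktracking E w \<Longrightarrow> geodesic E (hd w) (last w) w"
proof -
  assume w: "nonbacktracking E w"
  obtain v where v: "geodesic E (hd w) (last w) v" using geodesic_exists by blast
  then have "v = w"
    using nonbacktracking_unique[OF geodesic_nonbacktracking[OF v] w] by (simp add: geodesic_def)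
  then show ?thesis using v by simp
qed

lemma geodesic_unique: "geodesic E x y p \<Longrightarrow> geodesic E x y q \<Longrightarrow> p = q"
  using nonbacktracking_unique geodesic_nonbacktracking unfolding geodesic_def by metis

lemma dist_self [simp]: "dist E x x = 0"
  using dist_le_walk[of E "[x]" x x] by simp

lemma dist_eq_0_iff [simp]: "dist E x y = 0 \<longleftrightarrow> x = y"
  using geodesic_exists[of x y] by (auto simp: geodesic_def length_Suc_conv)

lemma dist_eq_1_iff: "dist E x y = 1 \<longleftrightarrow> E x y"
proof
  assume "dist E x y = 1"
  moreover obtain w where "geodesic E x y w" using geodesic_exists by blast
  ultimately show "E x y" by (auto simp: geodesic_def length_Suc_conv walk_Cons)
next
  assume "E x y"
  then have "nonbacktracking E [x, y]" by (simp add: nonbacktracking_Cons_Cons)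
  then show "dist E x y = 1" using nonbacktracking_geodesic by (fastforce simp: geodesic_def)
qed

lemma dist_Suc_neighbour:
  assumes "dist E x y = Suc r" shows "\<exists>v. E v y \<and> dist E x v = r"
proof -
  obtain w where w: "geodesic E x y w" using geodesic_exists by blast
  let ?u = "take (Suc r) w"
  have "geodesic E (hd ?u) (last ?u) ?u"
    using w geodesic_nonbacktracking nonbacktracking_take nonbacktracking_geodesic by blast
  moreover have "hd ?u = x" using w by (cases w) (auto simp: geodesic_def)
  moreover have "last ?u = w ! r" "length ?u = Suc r"
    using w assms by (auto simp: geodesic_def take_Suc_conv_app_nth)
  ultimately have "dist E x (w ! r) = r" by (simp add: geodesic_def)
  moreover have "E (w ! r) y"
    using w assms walk_nth[of E w r] by (auto simp: geodesic_def last_conv_nth walk_def)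
  ultimately show ?thesis by blast
qed

lemma finite_ball:
  assumes "\<And>v. finite {w. E v w}" shows "finite {y. dist E x y \<le> r}"
proof (induction r)
  case (Suc r)
  have "{y. dist E x y \<le> Suc r} \<subseteq> {y. dist E x y \<le> r} \<union> (\<Union>v\<in>{y. dist E x y \<le> r}. {w. E v w})"
    using dist_Suc_neighbour adjacent_sym by (fastforce simp: le_Suc_eq)
  then show ?case by (rule finite_subset) (use Suc assms in auto)
qed simp

lemma Aut_adjacent_iff: "f \<in> Aut E \<Longrightarrow> E (f x) (f y) \<longleftrightarrow> E x y"
  by (metis Aut_dist dist_eq_1_iff)

lemma Aut_inf_path: "f \<in> Aut E \<Longrightarrow> inf_path E s \<Longrightarrow> inf_path E (f \<circ> s)"
  unfolding inf_path_def by (auto simp: Aut_adjacent_iff Aut_inj inj_compose)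

lemma end_image_end_of:
  assumes f: "f \<in> Aut E" and r: "inf_path E r"
  shows "end_image f (end_of E r) = end_of E (f \<circ> r)"
proof
  show "end_image f (end_of E r) \<subseteq> end_of E (f \<circ> r)"
    unfolding end_image_def end_of_def using Aut_inf_path[OF f] path_equiv_comp by blast
next
  show "end_of E (f \<circ> r) \<subseteq> end_image f (end_of E r)"
  proof
    fix t assume t: "t \<in> end_of E (f \<circ> r)"
    have bij: "bij f" using f by (simp add: Aut_def)
    have "inf_path E (inv f \<circ> t)" using Aut_inf_path[OF Aut_inv[OF f]] t by (simp add: end_of_def)
    moreover have "path_equiv r (inv f \<circ> t)"
      using path_equiv_comp[of "f \<circ> r" t "inv f"] t bij
      by (simp add: end_of_def o_assoc bij_is_inj)
    moreover have "t = f \<circ> (inv f \<circ> t)" using bij by (simp add: fun_eq_iff bij_is_surj surj_f_inv_f)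
    ultimately show "t \<in> end_image f (end_of E r)"
      unfolding end_image_def end_of_def by blast
  qed
qed

lemma Aut_geodesic: "f \<in> Aut E \<Longrightarrow> geodesic E x y w \<Longrightarrow> geodesic E (f x) (f y) (map f w)"
  unfolding geodesic_def walk_def by (auto simp: Aut_adjacent_iff Aut_dist hd_map last_map)

lemma Aut_nonbacktracking_seq:
  "f \<in> Aut E \<Longrightarrow> nonbacktracking_seq E s \<Longrightarrow> nonbacktracking_seq E (f \<circ> s)"
  unfolding nonbacktracking_seq_def by (auto simp: Aut_adjacent_iff Aut_inj inj_eq)

lemma isometry_in_Aut:
  assumes fin: "\<And>v. finite {w. E v w}" and reg: "\<And>v. card {w. E v w} = M"
    and f: "\<And>x y. dist E (f x) (f y) = dist E x y"
  shows "f \<in> Aut E"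
proof -
  have inj: "inj f" using f by (metis dist_eq_0_iff injI)
  have neighbours: "f ` {w. E u w} = {w. E (f u) w}" for u
  proof (rule card_subset_eq)
    show "f ` {w. E u w} \<subseteq> {w. E (f u) w}" by (auto simp flip: dist_eq_1_iff simp: f)
    show "card (f ` {w. E u w}) = card {w. E (f u) w}"
      using reg card_image inj by (metis inj_on_subset subset_UNIV)
  qed (rule fin)
  have "y \<in> range f" if "dist E (f x) y = n" for x y n
    using that
  proof (induction n arbitrary: y)
    case (Suc n)
    then obtain v where "E v y" "dist E (f x) v = n" using dist_Suc_neighbour by blast
    then obtain u where "v = f u" using Suc.IH by blast
    then show ?case using neighbours \<open>E v y\<close> by blast
  qed simp
  then have "surj f" by blast
  then show ?thesis using inj f by (simp add: Aut_def bij_def)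
qed

lemma nonbacktracking_seq_geodesic:
  "nonbacktracking_seq E s \<Longrightarrow> geodesic E (s i) (s (i + n)) (map (\<lambda>t. s (i + t)) [0..<Suc n])"
  using nonbacktracking_geodesic[OF nonbacktracking_seq_prefix]
  by (simp del: upt_Suc add: hd_map last_map)

lemma nonbacktracking_seq_dist: "nonbacktracking_seq E s \<Longrightarrow> dist E (s i) (s (i + n)) = n"
  using nonbacktracking_seq_geodesic by (fastforce simp: geodesic_def)

lemma nonbacktracking_seq_inj:
  assumes s: "nonbacktracking_seq E s" shows "inj s"
proof (rule injI)
  fix a b assume "s a = s b"
  moreover have "dist E (s (min a b)) (s (min a b + (max a b - min a b))) = max a b - min a b"
    using nonbacktracking_seq_dist[OF s] .
  ultimately show "a = b" by (auto simp: min_def max_def split: if_splits)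
qed

lemma nonbacktracking_seq_inf_path: "nonbacktracking_seq E s \<Longrightarrow> inf_path E s"
  using nonbacktracking_seq_inj unfolding inf_path_def nonbacktracking_seq_def by blast

lemma nonbacktracking_seq_eqI:
  assumes r: "nonbacktracking_seq E r" and s: "nonbacktracking_seq E s"
    and start: "r 0 = s 0" and equiv: "path_equiv r s"
  shows "r = s"
proof
  fix k
  obtain a b N where shift: "\<forall>i>N. r (i + a) = s (i + b)"
    using equiv path_equiv_iff_shift by blast
  \<comment> \<open>both sequences leave r 0 = s 0 at unit speed, so the shift is trivial\<close>
  define t where "t = Suc N + k"
  have "t + a = dist E (r 0) (r (t + a))" using nonbacktracking_seq_dist[OF r, of 0] by simp
  also have "\<dots> = dist E (s 0) (s (t + b))" using shift[rule_format, of t] start t_def by simp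
  also have "\<dots> = t + b" using nonbacktracking_seq_dist[OF s, of 0] by simp
  finally have "r (t + a) = s (t + a)" using shift[rule_format, of t] t_def by simp
  then have "map (\<lambda>i. r (0 + i)) [0..<Suc (t + a)] = map (\<lambda>i. s (0 + i)) [0..<Suc (t + a)]"
    using geodesic_unique nonbacktracking_seq_geodesic[OF r] nonbacktracking_seq_geodesic[OF s]
    by (metis add_0 start)
  moreover have "k < Suc (t + a)" using t_def by simp
  ultimately show "r k = s k"
    by (metis (no_types, lifting) add_0 diff_zero length_upt nth_map nth_upt)
qed

lemma biinf_pathI:
  assumes "\<And>i. E (b i) (b (i + 1))" "\<And>i. b (i + 2) \<noteq> b i"
  shows "biinf_path E b"
  unfolding biinf_path_def
proof (intro conjI allI injI)
  fix p q assume "b p = b q"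
  then have "b (min p q + int 0) = b (min p q + int (nat \<bar>q - p\<bar>))"
    by (cases "p \<le> q") (auto simp: min_def)
  moreover have "inj (\<lambda>n. b (min p q + int n))"
    using nonbacktracking_seq_inj[OF nonbacktracking_seq_int_shift[of E b, OF assms]] .
  ultimately have "0 = nat \<bar>q - p\<bar>" by (rule injD[rotated])
  then show "p = q" by simp
qed (rule assms)

lemma biinf_path_reflect: "biinf_path E b \<Longrightarrow> biinf_path E (\<lambda>i. b (- i))"
proof (rule biinf_pathI)
  fix i assume b: "biinf_path E b"
  show "E (b (- i)) (b (- (i + 1)))"
    using b adjacent_sym unfolding biinf_path_def
    by (metis add.commute diff_add_cancel minus_add_distrib uminus_add_conv_diff)
  show "b (- (i + 2)) \<noteq> b (- i)"
    using b unfolding biinf_path_def by (auto dest: injD)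
qed

lemma biinf_path_glue:
  assumes r: "nonbacktracking_seq E r" and r': "nonbacktracking_seq E r'"
    and start: "r' 0 = r 0" and branch: "r' 1 \<noteq> r 1"
  shows "biinf_path E (\<lambda>i. if 0 \<le> i then r (nat i) else r' (nat (- i)))" (is "biinf_path E ?b")
proof (rule biinf_pathI)
  have neg: "?b i = r' (nat (- i))" if "i \<le> 0" for i
    using that start by auto
  fix i :: int
  show "E (?b i) (?b (i + 1))"
  proof (cases "0 \<le> i")
    case True
    then have "nat (i + 1) = Suc (nat i)" by simp
    then show ?thesis using True r by (simp add: nonbacktracking_seq_def)
  next
    case False
    then have "nat (- i) = Suc (nat (- (i + 1)))" by simp
    then show ?thesis
      using False r' neg[of i] neg[of "i + 1"] adjacent_sym by (simp add: nonbacktracking_seq_def)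
  qed
  consider "0 \<le> i" | "i = -1" | "i \<le> -2" by linarith
  then show "?b (i + 2) \<noteq> ?b i"
  proof cases
    case 1
    then have "nat (i + 2) = Suc (Suc (nat i))" by simp
    then show ?thesis using 1 r by (simp add: nonbacktracking_seq_def)
  next
    case 2
    then show ?thesis using branch by simp
  next
    case 3
    have "r' (Suc (Suc (nat (- (i + 2))))) \<noteq> r' (nat (- (i + 2)))"
      using r' by (simp add: nonbacktracking_seq_def)
    moreover have "nat (- i) = Suc (Suc (nat (- (i + 2))))" using 3 by simp
    ultimately show ?thesis using 3 neg[of i] neg[of "i + 2"] by simp
  qed
qed

lemma biinf_path_inf_path_rays:
  assumes "biinf_path E b"
  shows "inf_path E (\<lambda>n. b (int n))" "inf_path E (\<lambda>n. b (- int n))"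
  using nonbacktracking_seq_inf_path biinf_path_shift_seq[OF assms, of 0]
    biinf_path_shift_seq[OF biinf_path_reflect[OF assms], of 0]
  by simp_all

lemma biinf_path_ends_neq:
  assumes b: "biinf_path E b"
  shows "end_of E (\<lambda>n. b (int n)) \<noteq> end_of E (\<lambda>n. b (- int n))"
proof
  assume eq: "end_of E (\<lambda>n. b (int n)) = end_of E (\<lambda>n. b (- int n))"
  have "(\<lambda>n. b (- int n)) \<in> end_of E (\<lambda>n. b (int n))"
    unfolding eq by (rule end_of_self[OF biinf_path_inf_path_rays(2)[OF b]])
  then have "path_equiv (\<lambda>n. b (int n)) (\<lambda>n. b (- int n))" by (simp add: end_of_def)
  then obtain a c N where "\<forall>i>N. b (int (i + a)) = b (- int (i + c))"
    unfolding path_equiv_iff_shift by blast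
  then have "b (int (Suc N + a)) = b (- int (Suc N + c))" by blast
  then show False using b unfolding biinf_path_def by (auto dest: injD)
qed

lemma biinf_path_in_apartment:
  "biinf_path E b \<Longrightarrow> b j \<in> apartment E (end_of E (\<lambda>n. b (int n))) (end_of E (\<lambda>n. b (- int n)))"
  unfolding apartment_def using end_of_self biinf_path_inf_path_rays by blast

lemma apartmentE:
  assumes "is_end E \<omega>1" "is_end E \<omega>2" "x \<in> apartment E \<omega>1 \<omega>2"
  obtains b where "biinf_path E b" "b 0 = x"
    "\<omega>1 = end_of E (\<lambda>n. b (int n))" "\<omega>2 = end_of E (\<lambda>n. b (- int n))"
proof -
  obtain b0 j where b0: "biinf_path E b0" "(\<lambda>n. b0 (int n)) \<in> \<omega>1" "(\<lambda>n. b0 (- int n)) \<in> \<omega>2"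
    "x = b0 j"
    using assms(3) unfolding apartment_def by blast
  define b where "b i = b0 (i + j)" for i
  have "biinf_path E b"
  proof (rule biinf_pathI)
    show "E (b i) (b (i + 1))" for i
      using b0(1) unfolding biinf_path_def b_def by (metis add.commute add.left_commute)
    show "b (i + 2) \<noteq> b i" for i
      using b0(1) unfolding biinf_path_def b_def by (auto dest: injD)
  qed
  moreover have "\<omega>1 = end_of E (\<lambda>n. b (int n))"
    using end_of_eq[OF assms(1) b0(2)] end_of_cong[OF path_equiv_shift_int[of b0 j]]
    by (simp add: b_def)
  moreover have "\<omega>2 = end_of E (\<lambda>n. b (- int n))"
    using end_of_eq[OF assms(2) b0(3)] end_of_cong[OF path_equiv_shift_int[of "\<lambda>i. b0 (- i)" "- j"]]
    by (simp add: b_def)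
  ultimately show ?thesis using that b0(4) b_def by simp
qed

end

locale leafless_tree = tree +
  assumes leafless: "\<exists>w. E v w \<and> w \<noteq> x"
begin

lemma nonbacktracking_seq_exists: "\<exists>s. nonbacktracking_seq E s \<and> s 0 = a \<and> s 1 \<noteq> p"
proof -
  define next_vertex where "next_vertex x y = (SOME w. E y w \<and> w \<noteq> x)" for x y
  have next_vertex: "E y (next_vertex x y) \<and> next_vertex x y \<noteq> x" for x y
    unfolding next_vertex_def using someI_ex[OF leafless] .
  \<comment> \<open>st n = (s (n - 1), s n), with p in the role of s (-1)\<close>
  define st where "st = rec_nat (p, a) (\<lambda>_ (x, y). (y, next_vertex x y))"
  have st0: "st 0 = (p, a)"
    and stS: "st (Suc n) = (snd (st n), next_vertex (fst (st n)) (snd (st n)))" for n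
    by (simp_all add: st_def split: prod.splits)
  define s where "s n = snd (st n)" for n
  have "s (Suc (Suc n)) = next_vertex (s n) (s (Suc n))" for n by (simp add: s_def stS)
  then have "nonbacktracking_seq E s"
    unfolding nonbacktracking_seq_def using next_vertex by (simp add: s_def stS)
  moreover have "s 0 = a" "s 1 \<noteq> p" using next_vertex by (simp_all add: s_def stS st0)
  ultimately show ?thesis by blast
qed

lemma biinf_path_through: "\<exists>b. biinf_path E b \<and> b 0 = x \<and> b (int (dist E x y)) = y"
proof -
  obtain w where w: "geodesic E x y w" using geodesic_exists by blast
  moreover have "w \<noteq> []" using w by (auto simp: geodesic_def walk_def)
  ultimately obtain p where p: "w = p @ [y]" by (metis append_butlast_last_id geodesic_def)
  obtain s where s: "nonbacktracking_seq E s" "s 0 = y" "s 1 \<noteq> last p"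
    using nonbacktracking_seq_exists by blast
  define r where "r = prepend p s"
  have r: "nonbacktracking_seq E r"
    unfolding r_def using w p s geodesic_nonbacktracking by (intro nonbacktracking_seq_prepend) auto
  have "r 0 = x" using w p s(2) by (simp add: r_def prepend_0 geodesic_def)
  moreover have "r (dist E x y) = y"
    using w p s(2) prepend_length_add[of p s 0] by (simp add: r_def geodesic_def)
  moreover obtain r' where r': "nonbacktracking_seq E r'" "r' 0 = r 0" "r' 1 \<noteq> r 1"
    using nonbacktracking_seq_exists by blast
  define b where "b i = (if 0 \<le> i then r (nat i) else r' (nat (- i)))" for i
  have "biinf_path E b" unfolding b_def by (rule biinf_path_glue[OF r r'])
  ultimately show ?thesis by (intro exI[of _ b]) (simp add: b_def)
qed

end

section \<open>The transitivity conditions\<close>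

definition sphere_transitive :: "('a \<Rightarrow> 'a \<Rightarrow> bool) \<Rightarrow> ('a \<Rightarrow> 'a) set \<Rightarrow> bool" where
  "sphere_transitive E G \<longleftrightarrow>
     (\<forall>x y z. dist E x y = dist E x z \<longrightarrow> (\<exists>g\<in>G. g x = x \<and> g y = z))"

definition apartment_transitive :: "('a \<Rightarrow> 'a \<Rightarrow> bool) \<Rightarrow> ('a \<Rightarrow> 'a) set \<Rightarrow> bool" where
  "apartment_transitive E G \<longleftrightarrow> (\<forall>\<omega>1 \<omega>2 \<sigma>1 \<sigma>2 x0 y0.
     is_end E \<omega>1 \<and> is_end E \<omega>2 \<and> \<omega>1 \<noteq> \<omega>2 \<and>
     is_end E \<sigma>1 \<and> is_end E \<sigma>2 \<and> \<sigma>1 \<noteq> \<sigma>2 \<and>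
     x0 \<in> apartment E \<omega>1 \<omega>2 \<and> y0 \<in> apartment E \<sigma>1 \<sigma>2 \<longrightarrow>
     (\<exists>g\<in>G. g x0 = y0 \<and> end_image g \<omega>1 = \<sigma>1 \<and> end_image g \<omega>2 = \<sigma>2))"

lemma weakly_two_transitive_imp_sphere_transitive:
  "weakly_two_transitive E G \<Longrightarrow> sphere_transitive E G"
  unfolding weakly_two_transitive_def sphere_transitive_def by blast

lemma sphere_transitive_imp_weakly_two_transitive:
  assumes G: "is_subgroup E G" and trans: "vertex_transitive G" and sph: "sphere_transitive E G"
  shows "weakly_two_transitive E G"
  unfolding weakly_two_transitive_def
proof (intro allI impI)
  fix x1 x2 y1 y2 assume d: "dist E x1 x2 = dist E y1 y2"
  obtain h where h: "h \<in> G" "h x1 = y1" using trans unfolding vertex_transitive_def by blast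
  then have "dist E y1 (h x2) = dist E y1 y2"
    using G d Aut_dist by (fastforce simp: is_subgroup_def)
  then obtain k where k: "k \<in> G" "k y1 = y1" "k (h x2) = y2"
    using sph unfolding sphere_transitive_def by metis
  show "\<exists>g\<in>G. g x1 = y1 \<and> g x2 = y2"
    using G h k by (intro bexI[of _ "k \<circ> h"]) (auto simp: is_subgroup_def)
qed

lemma closedin_finitely_approximable:
  fixes A :: "('a \<Rightarrow> 'b) set" and B :: "'a \<Rightarrow> 'b set"
  defines "X \<equiv> product_topology (\<lambda>x. discrete_topology (B x)) UNIV"
  shows "closedin X {h \<in> topspace X. \<forall>F. finite F \<longrightarrow> (\<exists>g\<in>A. \<forall>x\<in>F. g x = h x)}"
    (is "closedin X ?K")
  unfolding closedin_def
proof
  show "openin X (topspace X - ?K)"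
  proof (subst openin_subopen, intro ballI)
    fix h assume h: "h \<in> topspace X - ?K"
    then obtain F where F: "finite F" "\<forall>g\<in>A. \<exists>x\<in>F. g x \<noteq> h x" by auto
    define U where "U x = {h' \<in> topspace X. h' x \<in> {h x}}" for x
    have "openin X (U x)" for x
    proof -
      have "continuous_map X (discrete_topology (B x)) (\<lambda>h. h x)"
        unfolding X_def by (rule continuous_map_product_projection) simp
      then show ?thesis
        unfolding U_def by (rule openin_continuous_map_preimage) (use h in \<open>auto simp: X_def\<close>)
    qed
    then have "openin X ((\<Inter>x\<in>F. U x) \<inter> topspace X)" using openin_INT[OF F(1)] by blast
    moreover have "(\<Inter>x\<in>F. U x) \<inter> topspace X \<subseteq> topspace X - ?K"
    proof (intro subsetI DiffI)
      fix h' assume h': "h' \<in> (\<Inter>x\<in>F. U x) \<inter> topspace X"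
      then show "h' \<in> topspace X" by blast
      show "h' \<notin> ?K"
      proof
        assume "h' \<in> ?K"
        then obtain g where "g \<in> A" "\<forall>x\<in>F. g x = h' x" using F(1) by blast
        then show False using F(2) h' by (fastforce simp: U_def)
      qed
    qed
    moreover have "h \<in> (\<Inter>x\<in>F. U x) \<inter> topspace X" using h by (auto simp: U_def)
    ultimately show "\<exists>T. openin X T \<and> h \<in> T \<and> T \<subseteq> topspace X - ?K" by blast
  qed
qed auto

lemma nested_pointwise_limit:
  fixes A :: "nat \<Rightarrow> ('a \<Rightarrow> 'b) set"
  assumes fin: "\<And>x. finite (B x)" and dec: "decseq A" and ne: "\<And>n. A n \<noteq> {}"
    and sub: "\<And>n. A n \<subseteq> Pi UNIV B"
  shows "\<exists>f. \<forall>n F. finite F \<longrightarrow> (\<exists>g\<in>A n. \<forall>x\<in>F. g x = f x)"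
proof -
  define X where "X = product_topology (\<lambda>x. discrete_topology (B x)) UNIV"
  have tX: "topspace X = Pi UNIV B" by (simp add: X_def PiE_UNIV_domain)
  have "compact_space X"
    unfolding X_def using fin
    by (simp add: compact_space_product_topology compact_space_discrete_topology)
  define K where "K n = {h \<in> topspace X. \<forall>F. finite F \<longrightarrow> (\<exists>g\<in>A n. \<forall>x\<in>F. g x = h x)}" for n
  have "closedin X (K n)" for n
    unfolding K_def X_def by (rule closedin_finitely_approximable)
  moreover have "K n \<noteq> {}" for n
  proof -
    obtain g where "g \<in> A n" using ne by blast
    then have "g \<in> K n" using sub by (auto simp: K_def tX)
    then show ?thesis by blast
  qed
  moreover have "decseq K" using dec unfolding decseq_def K_def by blast
  ultimately obtain f where "f \<in> (\<Inter>n. K n)"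
    using compact_space_imp_nest[OF \<open>compact_space X\<close>] by blast
  then show ?thesis by (auto simp: K_def)
qed

context tree
begin

lemma weakly_two_transitive_segment:
  assumes G: "G \<subseteq> Aut E" "weakly_two_transitive E G"
    and b: "biinf_path E b" and c: "biinf_path E c"
  shows "\<exists>g\<in>G. \<forall>k. \<bar>k\<bar> \<le> int n \<longrightarrow> g (b k) = c k"
proof -
  define segment where "segment f = map (\<lambda>t. f (- int n + int t)) [0..<Suc (2 * n)]"
    for f :: "int \<Rightarrow> 'a"
  have geodesic: "geodesic E (f (- int n)) (f (int n)) (segment f)" if "biinf_path E f" for f
    using nonbacktracking_seq_geodesic[OF biinf_path_shift_seq[OF that, of "- int n"], of 0 "2 * n"]
    by (simp add: segment_def)
  have "dist E (f (- int n)) (f (int n)) = 2 * n" if "biinf_path E f" for f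
    using geodesic[OF that] by (simp add: geodesic_def segment_def)
  then have "dist E (b (- int n)) (b (int n)) = dist E (c (- int n)) (c (int n))"
    using b c by simp
  then obtain g where g: "g \<in> G" "g (b (- int n)) = c (- int n)" "g (b (int n)) = c (int n)"
    using G(2) unfolding weakly_two_transitive_def by blast
  have "map g (segment b) = segment c"
    using geodesic_unique Aut_geodesic[OF _ geodesic[OF b]] geodesic[OF c] g G(1) by (metis subsetD)
  then have on_segment: "g (b (int t - int n)) = c (int t - int n)" if "t \<le> 2 * n" for t
    using that by (simp add: segment_def del: upt_Suc)
  have "g (b k) = c k" if "\<bar>k\<bar> \<le> int n" for k
  proof -
    have "nat (k + int n) \<le> 2 * n" "int (nat (k + int n)) - int n = k" using that by auto
    then show ?thesis using on_segment[of "nat (k + int n)"] by simp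
  qed
  then show ?thesis using g(1) by blast
qed

lemma weakly_two_transitive_biinf_path:
  assumes fin: "\<And>v. finite {w. E v w}" and reg: "\<And>v. card {w. E v w} = M"
    and G: "G \<subseteq> Aut E" "closed_in_Aut E G" "weakly_two_transitive E G"
    and b: "biinf_path E b" and c: "biinf_path E c"
  shows "\<exists>f\<in>G. f \<circ> b = c"
proof -
  define A where "A n = {g \<in> G. \<forall>k. \<bar>k\<bar> \<le> int n \<longrightarrow> g (b k) = c k}" for n
  define B where "B v = {y. dist E (c 0) y \<le> dist E (b 0) v}" for v
  have "A n \<subseteq> Pi UNIV B" for n
  proof
    fix g assume "g \<in> A n"
    then have g: "g \<in> Aut E" "g (b 0) = c 0" using G(1) by (auto simp: A_def)
    then have "dist E (c 0) (g v) = dist E (b 0) v" for v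
      using Aut_dist[OF g(1), of "b 0" v] by simp
    then show "g \<in> Pi UNIV B" by (simp add: B_def)
  qed
  moreover have "A n \<noteq> {}" for n
    using weakly_two_transitive_segment[OF G(1,3) b c] by (auto simp: A_def)
  moreover have "decseq A" unfolding decseq_def A_def by force
  ultimately obtain f where f: "\<And>n F. finite F \<Longrightarrow> \<exists>g\<in>A n. \<forall>x\<in>F. g x = f x"
    using nested_pointwise_limit[of B A] finite_ball[OF fin] by (auto simp: B_def)
  have "dist E (f x) (f y) = dist E x y" for x y
  proof -
    obtain g where "g \<in> G" "g x = f x" "g y = f y" using f[of "{x, y}" 0] by (auto simp: A_def)
    then show ?thesis using G(1) Aut_dist[of g E x y] by auto
  qed
  then have "f \<in> Aut E" by (rule isometry_in_Aut[OF fin reg])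
  moreover have "\<forall>F. finite F \<longrightarrow> (\<exists>g\<in>G. \<forall>x\<in>F. g x = f x)"
    using f[of _ 0] by (auto simp: A_def)
  ultimately have "f \<in> G" using G(2) unfolding closed_in_Aut_def by blast
  moreover have "f (b k) = c k" for k
    using f[of "{b k}" "nat \<bar>k\<bar>"] by (auto simp: A_def)
  ultimately show ?thesis by (intro bexI[of _ f]) auto
qed

lemma weakly_two_transitive_imp_apartment_transitive:
  assumes fin: "\<And>v. finite {w. E v w}" and reg: "\<And>v. card {w. E v w} = M"
    and G: "G \<subseteq> Aut E" "closed_in_Aut E G" "weakly_two_transitive E G"
  shows "apartment_transitive E G"
  unfolding apartment_transitive_def
proof (intro allI impI, elim conjE)
  fix \<omega>1 \<omega>2 \<sigma>1 \<sigma>2 x0 y0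
  assume "is_end E \<omega>1" "is_end E \<omega>2" "is_end E \<sigma>1" "is_end E \<sigma>2"
    and x0: "x0 \<in> apartment E \<omega>1 \<omega>2" and y0: "y0 \<in> apartment E \<sigma>1 \<sigma>2"
  then obtain b c where b: "biinf_path E b" "b 0 = x0"
      "\<omega>1 = end_of E (\<lambda>n. b (int n))" "\<omega>2 = end_of E (\<lambda>n. b (- int n))"
    and c: "biinf_path E c" "c 0 = y0"
      "\<sigma>1 = end_of E (\<lambda>n. c (int n))" "\<sigma>2 = end_of E (\<lambda>n. c (- int n))"
    by (metis apartmentE)
  obtain f where f: "f \<in> G" "f \<circ> b = c"
    using weakly_two_transitive_biinf_path[OF fin reg G b(1) c(1)] by blast
  then have "f \<in> Aut E" using G(1) by blast
  then have "end_image f \<omega>1 = \<sigma>1" "end_image f \<omega>2 = \<sigma>2"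
    using end_image_end_of biinf_path_inf_path_rays[OF b(1)] b(3,4) c(3,4) f(2)
    by (auto simp: o_def fun_eq_iff)
  then show "\<exists>g\<in>G. g x0 = y0 \<and> end_image g \<omega>1 = \<sigma>1 \<and> end_image g \<omega>2 = \<sigma>2"
    using f b(2) c(2) by (auto simp: fun_eq_iff)
qed

end

context leafless_tree
begin

lemma apartment_transitive_imp_sphere_transitive:
  assumes G: "G \<subseteq> Aut E" and apt: "apartment_transitive E G"
  shows "sphere_transitive E G"
  unfolding sphere_transitive_def
proof (intro allI impI)
  fix x y z assume d: "dist E x y = dist E x z"
  obtain b where b: "biinf_path E b" "b 0 = x" "b (int (dist E x y)) = y"
    using biinf_path_through by blast
  obtain c where c: "biinf_path E c" "c 0 = x" "c (int (dist E x y)) = z"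
    using biinf_path_through d by metis
  let ?r = "\<lambda>n. b (int n)" and ?\<rho> = "\<lambda>n. c (int n)"
  obtain g where g: "g \<in> G" "g (b 0) = c 0" "end_image g (end_of E ?r) = end_of E ?\<rho>"
    using apt b(1) c(1) unfolding apartment_transitive_def
    by (metis is_end_end_of biinf_path_inf_path_rays biinf_path_ends_neq biinf_path_in_apartment)
  \<comment> \<open>g fixes x and maps the end of the ray from x through y to that of the ray from x
    through z; two rays from one vertex into one end coincide\<close>
  have gA: "g \<in> Aut E" using g(1) G by blast
  have "end_of E (g \<circ> ?r) = end_of E ?\<rho>"
    using g(3) end_image_end_of[OF gA biinf_path_inf_path_rays(1)[OF b(1)]] by simp
  then have "g \<circ> ?r \<in> end_of E ?\<rho>"
    using end_of_self Aut_inf_path[OF gA biinf_path_inf_path_rays(1)[OF b(1)]] by metis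
  then have "path_equiv (g \<circ> ?r) ?\<rho>" by (simp add: end_of_def path_equiv_sym)
  moreover have "nonbacktracking_seq E (g \<circ> ?r)" "nonbacktracking_seq E ?\<rho>"
    using Aut_nonbacktracking_seq[OF gA] biinf_path_shift_seq[OF b(1), of 0]
      biinf_path_shift_seq[OF c(1), of 0] by simp_all
  ultimately have "g \<circ> ?r = ?\<rho>" using nonbacktracking_seq_eqI g(2) by simp
  then have "g y = z" using b(3) c(3) by (metis comp_apply)
  moreover have "g x = x" using g(2) b(2) c(2) by simp
  ultimately show "\<exists>g\<in>G. g x = x \<and> g y = z" using g(1) by blast
qed

end

lemma bruhat_tits_treeE:
  assumes "bruhat_tits_tree E"
  obtains M where "leafless_tree E" "\<And>v. finite {w. E v w}" "\<And>v. card {w. E v w} = M"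
proof -
  obtain m :: nat where m: "m \<ge> 2" "\<And>v. finite {w. E v w}" "\<And>v. card {w. E v w} = m + 1"
    and tree: "is_tree E"
    using assms unfolding bruhat_tits_tree_def by blast
  have "\<exists>w. E v w \<and> w \<noteq> x" for v x
  proof -
    have "card ({w. E v w} - {x}) \<ge> m"
      using m card_Diff_singleton_if[of "{w. E v w}" x] by (simp split: if_splits)
    then have "{w. E v w} - {x} \<noteq> {}"
      using m(1) by (metis card.empty le_zero_eq not_numeral_le_zero)
    then show ?thesis by blast
  qed
  then have "leafless_tree E"
    using tree by (simp add: leafless_tree_def leafless_tree_axioms_def tree_def)
  then show ?thesis using that m(2,3) by blast
qed

theorem mainTheorem1:
  fixes E :: "'a \<Rightarrow> 'a \<Rightarrow> bool" and G :: "('a \<Rightarrow> 'a) set"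
  assumes "bruhat_tits_tree E"
    and "is_subgroup E G"
    and "closed_in_Aut E G"
    and "vertex_transitive G"
  defines "C1 \<equiv> (\<forall>x1 x2 y1 y2. dist E x1 x2 = dist E y1 y2 \<longrightarrow>
                    (\<exists>g\<in>G. g x1 = y1 \<and> g x2 = y2))"
    and "C2 \<equiv> (\<forall>x y z. dist E x y = dist E x z \<longrightarrow> (\<exists>g\<in>G. g x = x \<and> g y = z))"
    and "C3 \<equiv> (\<forall>\<omega>1 \<omega>2 \<sigma>1 \<sigma>2 x0 y0.
                 is_end E \<omega>1 \<and> is_end E \<omega>2 \<and> \<omega>1 \<noteq> \<omega>2 \<and>
                 is_end E \<sigma>1 \<and> is_end E \<sigma>2 \<and> \<sigma>1 \<noteq> \<sigma>2 \<and>
                 x0 \<in> apartment E \<omega>1 \<omega>2 \<and> y0 \<in> apartment E \<sigma>1 \<sigma>2 \<longrightarrow>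
                 (\<exists>g\<in>G. g x0 = y0 \<and> end_image g \<omega>1 = \<sigma>1 \<and> end_image g \<omega>2 = \<sigma>2))"
  shows "(C1 \<longleftrightarrow> C2) \<and> (C2 \<longleftrightarrow> C3) \<and> ((C1 \<or> C2 \<or> C3) \<longrightarrow> weakly_two_transitive E G)"
proof -
  obtain M where leafless: "leafless_tree E"
    and fin: "\<And>v. finite {w. E v w}" and reg: "\<And>v. card {w. E v w} = M"
    using bruhat_tits_treeE[OF assms(1)] by blast
  interpret leafless_tree E by (rule leafless)
  have GA: "G \<subseteq> Aut E" using assms(2) by (simp add: is_subgroup_def)
  have "C1 = weakly_two_transitive E G" "C2 = sphere_transitive E G" "C3 = apartment_transitive E G"
    unfolding C1_def C2_def C3_def weakly_two_transitive_def sphere_transitive_def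
      apartment_transitive_def by (rule refl)+
  moreover have "weakly_two_transitive E G \<longleftrightarrow> sphere_transitive E G"
    using weakly_two_transitive_imp_sphere_transitive
      sphere_transitive_imp_weakly_two_transitive[OF assms(2,4)] by blast
  moreover have "weakly_two_transitive E G \<Longrightarrow> apartment_transitive E G"
    using weakly_two_transitive_imp_apartment_transitive[OF fin reg GA assms(3)] .
  moreover have "apartment_transitive E G \<Longrightarrow> sphere_transitive E G"
    using apartment_transitive_imp_sphere_transitive[OF GA] .
  ultimately show ?thesis by blast
qed

end
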